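(* Let $r,s\ge 1$, $t\ge0$, and let $F:U\to\mathbb P^{r',s',t'}$ be a holomorphic map, where $U\subset\mathbb P^{r,s,t}$ is an open set containing a null point. If $F$ maps null points of $U$ to null points, then there exists a connected open set $V\subset U$ containing a null point such that $F|_V:V\to\mathbb P^{r',s',t'}$ is a local orthogonal map.
   Context: Let $r,s,t\ge 0$ be integers with $n=r+s+t>0$. $\mathbb C^{r,s,t}$ denotes $\mathbb C^n$ equipped with the (possibly degenerate, indefinite) Hermitian form $\langle z,w\rangle_{r,s,t}=\sum_{j=1}^{r}z_j\bar w_j-\sum_{j=r+1}^{r+s}z_j\bar w_j$, and $\mathbb P^{r,s,t}$ is its projectivization. A point $[z]\in\mathbb P^{r,s,t}$ is positive, negative or null according as $\langle z,z\rangle_{r,s,t}>0$, $<0$ or $=0$. Two points $[z],[w]$ are orthogonal, $[z]\perp[w]$, if $\langle z,w\rangle_{r,s,t}=0$. Let $V\subset\mathbb P^{r,s,t}$ be a connected open set containing a null point. A holomorphic map $F:V\to\mathbb P^{r',s',t'}$ is called a local orthogonal map if $F(p)\perp F(q)$ for all $p,q\in V$ with $p\perp q$. *)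

theory Defs
  imports "HOL-Analysis.Analysis"
begin

text \<open>A Hermitian form of signature (r,s,t) is given by two disjoint index sets Ps (positive
  coordinates, card r) and Ns (negative coordinates, card s); the remaining t coordinates
  are degenerate.\<close>

definition hform :: "'n set \<Rightarrow> 'n set \<Rightarrow> complex ^ 'n \<Rightarrow> complex ^ 'n \<Rightarrow> complex" where
  "hform Ps Ns z w = (\<Sum>i\<in>Ps. z $ i * cnj (w $ i)) - (\<Sum>i\<in>Ns. z $ i * cnj (w $ i))"

definition signature_ok :: "'n::finite set \<Rightarrow> 'n set \<Rightarrow> bool" where
  "signature_ok Ps Ns \<longleftrightarrow> Ps \<inter> Ns = {}"

definition proj_pt :: "complex ^ 'n \<Rightarrow> (complex ^ 'n) set" where
  "proj_pt z = {c *s z | c. c \<noteq> 0}"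

definition Proj :: "(complex ^ 'n) set set" where
  "Proj = {proj_pt z | z. z \<noteq> 0}"

definition proj_topology :: "(complex ^ 'n) set topology" where
  "proj_topology = topology (\<lambda>U. U \<subseteq> Proj \<and> open {z. z \<noteq> 0 \<and> proj_pt z \<in> U})"

definition cholomorphic_on ::
  "(complex ^ 'n \<Rightarrow> complex ^ 'm) \<Rightarrow> (complex ^ 'n) set \<Rightarrow> bool" where
  "cholomorphic_on G W \<longleftrightarrow> (\<forall>x\<in>W. \<exists>L. (G has_derivative L) (at x) \<and>
      (\<forall>c v. L (c *s v) = c *s L v))"

definition proj_holomorphic ::
  "((complex ^ 'n) set \<Rightarrow> (complex ^ 'm) set) \<Rightarrow> (complex ^ 'n) set set \<Rightarrow> bool" where
  "proj_holomorphic F U \<longleftrightarrow>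
     (\<forall>p\<in>U. F p \<in> Proj) \<and>
     (\<forall>z. z \<noteq> 0 \<and> proj_pt z \<in> U \<longrightarrow>
        (\<exists>W G. open W \<and> z \<in> W \<and> (\<forall>w\<in>W. w \<noteq> 0 \<and> proj_pt w \<in> U) \<and>
           cholomorphic_on G W \<and>
           (\<forall>w\<in>W. G w \<noteq> 0 \<and> proj_pt (G w) = F (proj_pt w))))"

definition null_pt :: "'n set \<Rightarrow> 'n set \<Rightarrow> (complex ^ 'n) set \<Rightarrow> bool" where
  "null_pt Ps Ns p \<longleftrightarrow> (\<exists>z. z \<noteq> 0 \<and> p = proj_pt z \<and> hform Ps Ns z z = 0)"

definition orth_pt :: "'n set \<Rightarrow> 'n set \<Rightarrow> (complex ^ 'n) set \<Rightarrow> (complex ^ 'n) set \<Rightarrow> bool" where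
  "orth_pt Ps Ns p q \<longleftrightarrow> (\<exists>z w. z \<noteq> 0 \<and> w \<noteq> 0 \<and> p = proj_pt z \<and> q = proj_pt w \<and>
      hform Ps Ns z w = 0)"

definition local_orthogonal_map ::
  "'n set \<Rightarrow> 'n set \<Rightarrow> 'm set \<Rightarrow> 'm set \<Rightarrow>
   ((complex ^ 'n) set \<Rightarrow> (complex ^ 'm) set) \<Rightarrow> (complex ^ 'n) set set \<Rightarrow> bool" where
  "local_orthogonal_map Ps Ns Ps' Ns' F V \<longleftrightarrow>
     openin proj_topology V \<and> connectedin proj_topology V \<and>
     (\<exists>p\<in>V. null_pt Ps Ns p) \<and> proj_holomorphic F V \<and>
     (\<forall>p\<in>V. \<forall>q\<in>V. orth_pt Ps Ns p q \<longrightarrow> orth_pt Ps' Ns' (F p) (F q))"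

end

theory Submission
  imports Defs "HOL-Complex_Analysis.Conformal_Mappings"
begin

text \<open>Near a null vector z0 with a positive pivot coordinate j, orthogonal pairs (z, w)
  are parametrised by a complex chart X: for real X one takes z_k = a_k + i b_k (k \<noteq> j),
  z_j = sqrt(-R) exp(i \<theta>), where R collects the other terms of <z, z>, and w = z.
  Complexifying (a, b, \<theta>) gives orthogonal pairs with z and the conjugate of w holomorphic
  in X, and every orthogonal pair near (z0, z0) comes from some X near the real centre.
  For a holomorphic lift G of F, the function X \<mapsto> <G z, G w> is thus holomorphic, and it
  vanishes at real X because F preserves null points; by the identity theorem it vanishes
  near the centre, so G preserves orthogonality near z0. The image in projective space of a
  small ball around z0 is the required set V.\<close>

lemma isCont_vec_lambda:
  assumes "\<And>k. isCont (\<lambda>x. f x k) a"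
  shows "isCont (\<lambda>x. \<chi> k. f x k) a"
  using assms unfolding isCont_def by (intro tendsto_vec_lambda) auto

lemma isCont_eventually_in_open:
  assumes "isCont f a" "open S" "f a \<in> S"
  shows "\<forall>\<^sub>F x in nhds a. f x \<in> S"
  using assms topological_tendstoD unfolding isCont_def tendsto_at_iff_tendsto_nhds by blast

lemma has_derivative_curve_componentwise:
  fixes \<gamma> :: "complex \<Rightarrow> complex ^ 'n"
  assumes "\<And>k. ((\<lambda>l. \<gamma> l $ k) has_field_derivative d $ k) (at l0)"
  shows "(\<gamma> has_derivative (\<lambda>h. h *s d)) (at l0)"
proof -
  have "linear (\<lambda>h::complex. h *s d)"
    by (rule linearI) (simp_all add: vec_eq_iff algebra_simps)
  then have "bounded_linear (\<lambda>h::complex. h *s d)"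
    using linear_conv_bounded_linear by blast
  moreover have "((\<lambda>y. ((\<gamma> y - \<gamma> l0) - (y - l0) *s d) /\<^sub>R norm (y - l0)) \<longlongrightarrow> 0) (at l0)"
  proof (rule vec_tendstoI)
    fix k
    from assms[of k] have "((\<lambda>y. ((\<gamma> y $ k - \<gamma> l0 $ k) - d $ k * (y - l0)) /\<^sub>R norm (y - l0))
        \<longlongrightarrow> 0) (at l0)"
      unfolding has_field_derivative_def has_derivative_def by simp
    then show "((\<lambda>y. (((\<gamma> y - \<gamma> l0) - (y - l0) *s d) /\<^sub>R norm (y - l0)) $ k) \<longlongrightarrow> 0 $ k) (at l0)"
      by (simp add: algebra_simps)
  qed
  ultimately show ?thesis unfolding has_derivative_def by simp
qed

lemma has_field_derivative_comp_curve:
  fixes G :: "complex ^ 'n \<Rightarrow> complex ^ 'm" and \<gamma> :: "complex \<Rightarrow> complex ^ 'n"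
  assumes "(G has_derivative L) (at (\<gamma> l0))" "\<forall>c v. L (c *s v) = c *s L v"
    and "(\<gamma> has_derivative (\<lambda>h. h *s d)) (at l0)"
  shows "((\<lambda>l. G (\<gamma> l) $ m) has_field_derivative (L d $ m)) (at l0)"
proof -
  have "((G \<circ> \<gamma>) has_derivative (L \<circ> (\<lambda>h. h *s d))) (at l0)"
    by (rule diff_chain_at[OF assms(3) assms(1)])
  then have "((\<lambda>l. (G \<circ> \<gamma>) l $ m) has_derivative (\<lambda>h. (L \<circ> (\<lambda>h. h *s d)) h $ m)) (at l0)"
    by (rule bounded_linear.has_derivative[OF bounded_linear_vec_nth])
  moreover have "(\<lambda>h. (L \<circ> (\<lambda>h. h *s d)) h $ m) = (*) (L d $ m)"
    using assms(2) by (auto simp: fun_eq_iff mult.commute)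
  ultimately show ?thesis unfolding has_field_derivative_def by (simp add: o_def)
qed

lemma holomorphic_on_cholomorphic_comp:
  fixes G :: "complex ^ 'n \<Rightarrow> complex ^ 'm" and \<gamma> :: "complex \<Rightarrow> complex ^ 'n"
  assumes "open T" "cholomorphic_on G W" "\<And>l. l \<in> T \<Longrightarrow> \<gamma> l \<in> W"
    and "\<And>k. (\<lambda>l. \<gamma> l $ k) holomorphic_on T"
  shows "(\<lambda>l. G (\<gamma> l) $ m) holomorphic_on T"
  unfolding holomorphic_on_open[OF assms(1)]
proof
  fix l assume l: "l \<in> T"
  obtain L where L: "(G has_derivative L) (at (\<gamma> l))" "\<forall>c v. L (c *s v) = c *s L v"
    using assms(2) assms(3)[OF l] unfolding cholomorphic_on_def by blast
  have "(\<gamma> has_derivative (\<lambda>h. h *s (\<chi> k. deriv (\<lambda>l. \<gamma> l $ k) l))) (at l)"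
    by (rule has_derivative_curve_componentwise)
      (use holomorphic_derivI[OF assms(4) assms(1) l] in simp)
  from has_field_derivative_comp_curve[OF L this]
  show "\<exists>f'. ((\<lambda>l. G (\<gamma> l) $ m) has_field_derivative f') (at l)" by blast
qed

definition vconj :: "complex ^ 'n \<Rightarrow> complex ^ 'n" where
  "vconj v = (\<chi> k. cnj (v $ k))"

lemma vconj_nth [simp]: "vconj v $ k = cnj (v $ k)"
  by (simp add: vconj_def)

lemma vconj_smult: "vconj (c *s v) = cnj c *s vconj v"
  by (simp add: vec_eq_iff)

lemma bounded_linear_vconj: "bounded_linear vconj"
proof -
  have "linear vconj"
    by (rule linearI) (simp_all add: vec_eq_iff)
  then show ?thesis using linear_conv_bounded_linear by blast
qed

lemma has_derivative_vconj_conjugate: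
  fixes G :: "complex ^ 'n \<Rightarrow> complex ^ 'm"
  assumes "(G has_derivative L) (at (vconj v0))" "\<forall>c v. L (c *s v) = c *s L v"
  shows "((\<lambda>v. vconj (G (vconj v))) has_derivative (\<lambda>u. vconj (L (vconj u)))) (at v0)"
    and "\<forall>c v. vconj (L (vconj (c *s v))) = c *s vconj (L (vconj v))"
proof -
  have "(vconj has_derivative vconj) (at v0)"
    by (rule bounded_linear_imp_has_derivative[OF bounded_linear_vconj])
  from diff_chain_at[OF this assms(1)]
  have "((\<lambda>v. vconj ((G \<circ> vconj) v)) has_derivative (\<lambda>u. vconj ((L \<circ> vconj) u))) (at v0)"
    by (rule bounded_linear.has_derivative[OF bounded_linear_vconj])
  then show "((\<lambda>v. vconj (G (vconj v))) has_derivative (\<lambda>u. vconj (L (vconj u)))) (at v0)"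
    by (simp add: o_def)
  show "\<forall>c v. vconj (L (vconj (c *s v))) = c *s vconj (L (vconj v))"
    using assms(2) by (simp add: vconj_smult)
qed

lemma holomorphic_on_conj_cholomorphic_comp:
  fixes G :: "complex ^ 'n \<Rightarrow> complex ^ 'm" and \<eta> :: "complex \<Rightarrow> complex ^ 'n"
  assumes "open T" "cholomorphic_on G W" "\<And>l. l \<in> T \<Longrightarrow> vconj (\<eta> l) \<in> W"
    and "\<And>k. (\<lambda>l. \<eta> l $ k) holomorphic_on T"
  shows "(\<lambda>l. cnj (G (vconj (\<eta> l)) $ m)) holomorphic_on T"
  unfolding holomorphic_on_open[OF assms(1)]
proof
  fix l assume l: "l \<in> T"
  obtain L where L: "(G has_derivative L) (at (vconj (\<eta> l)))" "\<forall>c v. L (c *s v) = c *s L v"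
    using assms(2) assms(3)[OF l] unfolding cholomorphic_on_def by blast
  have "(\<eta> has_derivative (\<lambda>h. h *s (\<chi> k. deriv (\<lambda>l. \<eta> l $ k) l))) (at l)"
    by (rule has_derivative_curve_componentwise)
      (use holomorphic_derivI[OF assms(4) assms(1) l] in simp)
  from has_field_derivative_comp_curve[OF has_derivative_vconj_conjugate[OF L] this]
  show "\<exists>f'. ((\<lambda>l. cnj (G (vconj (\<eta> l)) $ m)) has_field_derivative f') (at l)" by auto
qed

section \<open>An identity theorem for separately holomorphic functions\<close>

definition vec_upd :: "complex ^ 'k \<Rightarrow> 'k \<Rightarrow> complex \<Rightarrow> complex ^ 'k" where
  "vec_upd x i l = (\<chi> k. if k = i then l else x $ k)"

lemma vec_upd_nth: "vec_upd x i l $ k = (if k = i then l else x $ k)"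
  by (simp add: vec_upd_def)

lemma vec_upd_same [simp]: "vec_upd x i (x $ i) = x"
  by (simp add: vec_upd_def vec_eq_iff)

lemma vec_upd_nth_holomorphic_on: "(\<lambda>l. vec_upd x i l $ k) holomorphic_on T"
  by (cases "k = i") (simp_all add: vec_upd_nth)

lemma open_vec_upd_slice:
  assumes "open S"
  shows "open {l. vec_upd x i l \<in> S}"
proof -
  have "continuous_on UNIV (vec_upd x i)"
    unfolding vec_upd_def
  proof (intro continuous_on_vec_lambda)
    fix k show "continuous_on UNIV (\<lambda>l. if k = i then l else x $ k)"
      by (cases "k = i") (simp_all add: continuous_on_const continuous_on_id)
  qed
  from open_vimage[OF assms this] show ?thesis by (simp add: vimage_def)
qed

lemma convex_vec_upd_slice:
  assumes "convex S"
  shows "convex {l. vec_upd x i l \<in> S}"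
  unfolding convex_def
proof (intro ballI allI impI)
  fix a b :: complex and u v :: real
  assume "a \<in> {l. vec_upd x i l \<in> S}" "b \<in> {l. vec_upd x i l \<in> S}" and uv: "0 \<le> u" "0 \<le> v" "u + v = 1"
  moreover have "vec_upd x i (u *\<^sub>R a + v *\<^sub>R b) = u *\<^sub>R vec_upd x i a + v *\<^sub>R vec_upd x i b"
    using uv by (auto simp: vec_eq_iff vec_upd_nth algebra_simps simp flip: scaleR_add_left)
  ultimately show "u *\<^sub>R a + v *\<^sub>R b \<in> {l. vec_upd x i l \<in> S}"
    using convexD[OF assms] by simp
qed

lemma vec_upd_centre_in_ball:
  assumes "x \<in> ball c r"
  shows "vec_upd x i (c $ i) \<in> ball c r"
proof -
  have "norm (c - vec_upd x i (c $ i)) \<le> norm (c - x)"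
    unfolding norm_vec_def by (rule L2_set_mono) (auto simp: vec_upd_nth)
  then show ?thesis using assms by (simp add: dist_norm)
qed

lemma Reals_islimpt_open:
  fixes c :: complex
  assumes "c \<in> \<real>" "open S" "c \<in> S"
  shows "c islimpt S \<inter> \<real>"
  unfolding islimpt_approachable
proof (intro allI impI)
  fix \<epsilon> :: real assume "\<epsilon> > 0"
  obtain e where e: "e > 0" "ball c e \<subseteq> S"
    using assms(2,3) open_contains_ball by blast
  define t where "t = min \<epsilon> e / 2"
  have t: "t > 0" "t < \<epsilon>" "t < e" using \<open>\<epsilon> > 0\<close> e by (auto simp: t_def)
  then have "c + of_real t \<in> S \<inter> \<real>"
    using e assms(1) by (auto simp: dist_norm)
  moreover have "c + of_real t \<noteq> c" "dist (c + of_real t) c < \<epsilon>"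
    using t by (simp_all add: dist_norm)
  ultimately show "\<exists>x'\<in>S \<inter> \<real>. x' \<noteq> c \<and> dist x' c < \<epsilon>" by blast
qed

text \<open>Induction on the set of coordinates allowed to be non-real: each new coordinate is
  reached by analytic continuation along its slice, which meets the real axis at the
  (real) centre coordinate.\<close>

lemma separately_holomorphic_eq_0_from_Reals:
  fixes f :: "complex ^ 'k \<Rightarrow> complex" and c :: "complex ^ 'k"
  assumes creal: "\<And>i. c $ i \<in> \<real>"
    and hol: "\<And>x i. x \<in> ball c r \<Longrightarrow> (\<lambda>l. f (vec_upd x i l)) holomorphic_on {l. vec_upd x i l \<in> ball c r}"
    and zero: "\<And>x. x \<in> ball c r \<Longrightarrow> (\<forall>i. x $ i \<in> \<real>) \<Longrightarrow> f x = 0"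
    and x: "x \<in> ball c r"
  shows "f x = 0"
proof -
  have "finite K \<Longrightarrow> \<forall>x\<in>ball c r. (\<forall>i. i \<notin> K \<longrightarrow> x $ i \<in> \<real>) \<longrightarrow> f x = 0" for K :: "'k set"
  proof (induction K rule: finite_induct)
    case empty
    then show ?case using zero by auto
  next
    case (insert k K)
    show ?case
    proof (intro ballI impI)
      fix x assume xb: "x \<in> ball c r" and xr: "\<forall>i. i \<notin> insert k K \<longrightarrow> x $ i \<in> \<real>"
      define S where "S = {l. vec_upd x k l \<in> ball c r}"
      have "open S" "connected S"
        unfolding S_def
        by (simp_all only: open_vec_upd_slice[OF open_ball] convex_connected convex_vec_upd_slice[OF convex_ball])
      have "c $ k \<in> S" "x $ k \<in> S"
        unfolding S_def using xb vec_upd_centre_in_ball[OF xb] by simp_all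
      have "f (vec_upd x k l) = 0" if "l \<in> S \<inter> \<real>" for l
        using that xr insert.IH unfolding S_def by (auto simp: vec_upd_nth)
      then have "f (vec_upd x k (x $ k)) = 0"
        using analytic_continuation[of "\<lambda>l. f (vec_upd x k l)" S "S \<inter> \<real>" "c $ k"]
          hol[OF xb, of k] \<open>open S\<close> \<open>connected S\<close> \<open>c $ k \<in> S\<close> \<open>x $ k \<in> S\<close>
          Reals_islimpt_open[OF creal \<open>open S\<close> \<open>c $ k \<in> S\<close>]
        unfolding S_def by blast
      then show "f x = 0" by simp
    qed
  qed
  from this[of UNIV] x show ?thesis by simp
qed

lemma hform_smult_left: "hform Ps Ns (c *s z) w = c * hform Ps Ns z w"
  by (simp add: hform_def sum_distrib_left right_diff_distrib mult.assoc)

lemma hform_smult_right: "hform Ps Ns z (c *s w) = cnj c * hform Ps Ns z w"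
  by (simp add: hform_def sum_distrib_left right_diff_distrib mult_ac)

lemma hform_remove_pivot:
  assumes "j \<in> Ps" "j \<notin> Ns"
  shows "hform Ps Ns z w = z $ j * cnj (w $ j)
     + ((\<Sum>k\<in>Ps - {j}. z $ k * cnj (w $ k)) - (\<Sum>k\<in>Ns. z $ k * cnj (w $ k)))"
  using assms unfolding hform_def by (simp add: sum.remove)

lemma proj_pt_in_Proj: "z \<noteq> 0 \<Longrightarrow> proj_pt z \<in> Proj"
  unfolding Proj_def by blast

lemma proj_pt_smult: "c \<noteq> 0 \<Longrightarrow> proj_pt (c *s z) = proj_pt z"
  unfolding proj_pt_def
proof (intro set_eqI iffI)
  fix x assume "c \<noteq> 0" "x \<in> {d *s (c *s z) |d. d \<noteq> 0}"
  then obtain d where "d \<noteq> 0" "x = (d * c) *s z" by (auto simp: vector_smult_assoc)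
  then show "x \<in> {d *s z |d. d \<noteq> 0}" using \<open>c \<noteq> 0\<close> by auto
next
  fix x assume "c \<noteq> 0" "x \<in> {d *s z |d. d \<noteq> 0}"
  then obtain d where "d \<noteq> 0" "x = d *s z" by auto
  then have "x = (d / c) *s (c *s z)" using \<open>c \<noteq> 0\<close> by (simp add: vector_smult_assoc)
  moreover have "d / c \<noteq> 0" using \<open>c \<noteq> 0\<close> \<open>d \<noteq> 0\<close> by simp
  ultimately show "x \<in> {d *s (c *s z) |d. d \<noteq> 0}" by blast
qed

lemma proj_pt_eqD:
  assumes "proj_pt a = proj_pt b"
  shows "\<exists>c. c \<noteq> 0 \<and> a = c *s b"
proof -
  have "a \<in> proj_pt a" unfolding proj_pt_def by (rule CollectI, rule exI[of _ 1]) simp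
  then show ?thesis using assms unfolding proj_pt_def by auto
qed

lemma null_pt_hform_eq_0:
  assumes "null_pt Ps Ns p" "proj_pt v = p"
  shows "hform Ps Ns v v = 0"
proof -
  obtain u where u: "p = proj_pt u" "hform Ps Ns u u = 0"
    using assms(1) unfolding null_pt_def by blast
  obtain c where "v = c *s u" using proj_pt_eqD[of v u] assms(2) u(1) by auto
  then show ?thesis using u(2) by (simp add: hform_smult_left hform_smult_right)
qed

lemma istopology_proj:
  "istopology (\<lambda>U::(complex ^ 'n::finite) set set. U \<subseteq> Proj \<and> open {z. z \<noteq> 0 \<and> proj_pt z \<in> U})"
  unfolding istopology_def
proof (rule conjI; intro allI impI)
  fix S T :: "(complex ^ 'n) set set"
  assume "S \<subseteq> Proj \<and> open {z. z \<noteq> 0 \<and> proj_pt z \<in> S}" "T \<subseteq> Proj \<and> open {z. z \<noteq> 0 \<and> proj_pt z \<in> T}"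
  moreover have "{z. z \<noteq> 0 \<and> proj_pt z \<in> S \<inter> T} = {z. z \<noteq> 0 \<and> proj_pt z \<in> S} \<inter> {z. z \<noteq> 0 \<and> proj_pt z \<in> T}"
    by auto
  ultimately show "S \<inter> T \<subseteq> Proj \<and> open {z. z \<noteq> 0 \<and> proj_pt z \<in> S \<inter> T}" by auto
next
  fix K :: "(complex ^ 'n) set set set"
  assume "\<forall>S\<in>K. S \<subseteq> Proj \<and> open {z. z \<noteq> 0 \<and> proj_pt z \<in> S}"
  moreover have "{z. z \<noteq> 0 \<and> proj_pt z \<in> \<Union>K} = (\<Union>S\<in>K. {z. z \<noteq> 0 \<and> proj_pt z \<in> S})" by auto
  ultimately show "\<Union>K \<subseteq> Proj \<and> open {z. z \<noteq> 0 \<and> proj_pt z \<in> \<Union>K}" by auto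
qed

lemma openin_proj_topology:
  "openin proj_topology U \<longleftrightarrow> U \<subseteq> Proj \<and> open {z. z \<noteq> 0 \<and> proj_pt z \<in> U}"
  unfolding proj_topology_def topology_inverse'[OF istopology_proj] ..

lemma topspace_proj_topology: "topspace (proj_topology :: (complex ^ 'n::finite) set topology) = Proj"
proof -
  have "{z :: complex ^ 'n. z \<noteq> 0 \<and> proj_pt z \<in> Proj} = - {0}"
    using proj_pt_in_Proj by auto
  then have "openin proj_topology (Proj :: (complex ^ 'n) set set)"
    unfolding openin_proj_topology by auto
  then show ?thesis unfolding topspace_def using openin_proj_topology by blast
qed

lemma continuous_on_vector_smult: "continuous_on UNIV (\<lambda>x::complex ^ 'n::finite. c *s x)"
proof -
  have "linear (\<lambda>x::complex ^ 'n. c *s x)"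
    by (rule linearI) (simp_all add: vec_eq_iff algebra_simps)
  then show ?thesis by (simp add: linear_continuous_on linear_conv_bounded_linear)
qed

lemma openin_proj_pt_image:
  fixes B :: "(complex ^ 'n::finite) set"
  assumes "open B" "0 \<notin> B"
  shows "openin proj_topology (proj_pt ` B)"
proof -
  have sat: "{x. x \<noteq> 0 \<and> proj_pt x \<in> proj_pt ` B} = (\<Union>c\<in>-{0}. (\<lambda>x. c *s x) -` B)"
  proof (intro set_eqI iffI)
    fix x assume "x \<in> {x. x \<noteq> 0 \<and> proj_pt x \<in> proj_pt ` B}"
    then obtain b where b: "b \<in> B" "proj_pt x = proj_pt b" by auto
    then obtain c where "c \<noteq> 0" "b = c *s x" using proj_pt_eqD[of b x] by auto
    then show "x \<in> (\<Union>c\<in>-{0}. (\<lambda>x. c *s x) -` B)" using b by auto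
  next
    fix x assume "x \<in> (\<Union>c\<in>-{0}. (\<lambda>x. c *s x) -` B)"
    then obtain c where c: "c \<noteq> 0" "c *s x \<in> B" by auto
    then have "x \<noteq> 0" using assms(2) by auto
    moreover have "proj_pt x \<in> proj_pt ` B" using c proj_pt_smult[of c x] by (metis image_eqI)
    ultimately show "x \<in> {x. x \<noteq> 0 \<and> proj_pt x \<in> proj_pt ` B}" by simp
  qed
  have "open (\<Union>c\<in>-{0}. (\<lambda>x. c *s x) -` B)"
    using open_vimage[OF assms(1) continuous_on_vector_smult] by blast
  moreover have "proj_pt ` B \<subseteq> Proj" using assms(2) by (blast intro: proj_pt_in_Proj)
  ultimately show ?thesis unfolding openin_proj_topology sat by blast
qed

lemma connectedin_proj_pt_image:
  fixes B :: "(complex ^ 'n::finite) set"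
  assumes "connected B" "0 \<notin> B"
  shows "connectedin proj_topology (proj_pt ` B)"
proof (rule connectedin_continuous_map_image)
  show "continuous_map (top_of_set B) proj_topology proj_pt"
    unfolding continuous_map_def topspace_euclidean_subtopology topspace_proj_topology
  proof (intro conjI allI impI)
    show "proj_pt \<in> B \<rightarrow> Proj" using assms(2) by (blast intro: proj_pt_in_Proj)
    fix U :: "(complex ^ 'n) set set" assume "openin proj_topology U"
    then have "openin (top_of_set B) (B \<inter> {z. z \<noteq> 0 \<and> proj_pt z \<in> U})"
      unfolding openin_proj_topology by blast
    moreover have "B \<inter> {z. z \<noteq> 0 \<and> proj_pt z \<in> U} = {x \<in> B. proj_pt x \<in> U}"
      using assms(2) by auto
    ultimately show "openin (top_of_set B) {x \<in> B. proj_pt x \<in> U}" by simp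
  qed
qed (simp add: connectedin_subtopology assms(1))

lemma proj_holomorphic_liftE:
  assumes "proj_holomorphic F U" "x \<noteq> 0" "proj_pt x \<in> U"
  obtains W G where "open W" "x \<in> W" "\<forall>w\<in>W. w \<noteq> 0 \<and> proj_pt w \<in> U" "cholomorphic_on G W"
    "\<forall>w\<in>W. G w \<noteq> 0 \<and> proj_pt (G w) = F (proj_pt w)"
  using assms unfolding proj_holomorphic_def by (elim conjE allE[of _ x]) auto

lemma proj_holomorphic_subset:
  assumes "proj_holomorphic F U" "openin proj_topology V" "V \<subseteq> U"
  shows "proj_holomorphic F V"
  unfolding proj_holomorphic_def
proof (intro conjI ballI allI impI)
  show "F p \<in> Proj" if "p \<in> V" for p
    using assms(1,3) that unfolding proj_holomorphic_def by blast
  fix x assume x: "x \<noteq> 0 \<and> proj_pt x \<in> V"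
  then obtain W G where W: "open W" "x \<in> W" "cholomorphic_on G W"
    "\<forall>w\<in>W. G w \<noteq> 0 \<and> proj_pt (G w) = F (proj_pt w)"
    using assms(3) by (metis proj_holomorphic_liftE[OF assms(1)] subsetD)
  define W' where "W' = W \<inter> {x. x \<noteq> 0 \<and> proj_pt x \<in> V}"
  have "open W'"
    unfolding W'_def using W(1) assms(2) by (simp add: open_Int openin_proj_topology)
  moreover have "cholomorphic_on G W'"
    using W(3) unfolding cholomorphic_on_def W'_def by blast
  moreover have "x \<in> W'" "\<forall>w\<in>W'. w \<noteq> 0 \<and> proj_pt w \<in> V"
    "\<forall>w\<in>W'. G w \<noteq> 0 \<and> proj_pt (G w) = F (proj_pt w)"
    using x W(2,4) unfolding W'_def by auto
  ultimately show "\<exists>W G. open W \<and> x \<in> W \<and> (\<forall>w\<in>W. w \<noteq> 0 \<and> proj_pt w \<in> V) \<and>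
           cholomorphic_on G W \<and> (\<forall>w\<in>W. G w \<noteq> 0 \<and> proj_pt (G w) = F (proj_pt w))"
    by blast
qed

lemma hform_self_Re_pivot:
  assumes "z $ j \<noteq> 0" "hform Ps Ns z z = 0"
  defines "z' \<equiv> cnj (z $ j) *s z"
  shows "z' $ j \<in> \<real>" "Re (z' $ j) > 0" "hform Ps Ns z' z' = 0"
proof -
  have "z' $ j = of_real ((norm (z $ j))\<^sup>2)"
    unfolding z'_def by (simp only: complex_norm_square vector_smult_component mult.commute)
  then show "z' $ j \<in> \<real>" "Re (z' $ j) > 0" using assms(1) by simp_all
  show "hform Ps Ns z' z' = 0"
    unfolding z'_def using assms(2) by (simp add: hform_smult_left hform_smult_right)
qed

lemma hform_self_eq_0_negative_part:
  assumes "hform Ps Ns z z = 0" "\<And>k. k \<in> Ps \<Longrightarrow> z $ k = 0" "k \<in> Ns" "finite Ns"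
  shows "z $ k = 0"
proof -
  have "(\<Sum>k\<in>Ns. z $ k * cnj (z $ k)) = 0" using assms(1,2) unfolding hform_def by simp
  then have "(\<Sum>k\<in>Ns. (norm (z $ k))\<^sup>2) = 0"
    by (metis (no_types, lifting) complex_norm_square of_real_eq_0_iff of_real_sum sum.cong)
  then show ?thesis using assms(3,4) by (subst (asm) sum_nonneg_eq_0_iff) auto
qed

text \<open>A null vector vanishing on all positive (hence all negative) coordinates is moved
  along the null direction e_j + e_n, which stays inside the cone for small t.\<close>

lemma exists_null_positive_pivot:
  fixes Ps Ns :: "'n::finite set" and z :: "complex ^ 'n"
  assumes disj: "Ps \<inter> Ns = {}" and ne: "Ps \<noteq> {}" "Ns \<noteq> {}"
    and Om: "open Om" "z \<in> Om" "\<And>x c. x \<in> Om \<Longrightarrow> c \<noteq> 0 \<Longrightarrow> c *s x \<in> Om"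
    and null: "hform Ps Ns z z = 0"
  obtains z0 j where "z0 \<in> Om" "j \<in> Ps" "z0 $ j \<in> \<real>" "Re (z0 $ j) > 0" "hform Ps Ns z0 z0 = 0"
proof (cases "\<exists>j\<in>Ps. z $ j \<noteq> 0")
  case True
  then obtain j where j: "j \<in> Ps" "z $ j \<noteq> 0" by auto
  then have "cnj (z $ j) *s z \<in> Om" using Om(2,3) by simp
  then show ?thesis using that j hform_self_Re_pivot[OF j(2) null] by blast
next
  case False
  then have zP: "\<And>k. k \<in> Ps \<Longrightarrow> z $ k = 0" by auto
  have zN: "\<And>k. k \<in> Ns \<Longrightarrow> z $ k = 0"
    using hform_self_eq_0_negative_part[OF null zP] by simp
  obtain j n where jn: "j \<in> Ps" "n \<in> Ns" using ne by auto
  define v :: "complex ^ 'n" where "v = (\<chi> k. if k = j \<or> k = n then 1 else 0)"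
  have "isCont (\<lambda>t::real. z + t *\<^sub>R v) 0" by (intro continuous_intros)
  from isCont_eventually_in_open[OF this Om(1)]
  have "\<forall>\<^sub>F t in nhds 0. z + t *\<^sub>R v \<in> Om" using Om(2) by simp
  then obtain d :: real where d: "d > 0" "\<And>t. dist t 0 < d \<Longrightarrow> z + t *\<^sub>R v \<in> Om"
    unfolding eventually_nhds_metric by auto
  define t where "t = d / 2"
  define z0 where "z0 = z + t *\<^sub>R v"
  have t: "t > 0" "z0 \<in> Om" using d by (auto simp: t_def z0_def)
  have comp: "z0 $ k = z $ k + (if k = j \<or> k = n then of_real t else 0)" for k
    unfolding z0_def v_def by (simp add: of_real_def)
  have "(\<Sum>k\<in>Ps. z0 $ k * cnj (z0 $ k)) = (\<Sum>k\<in>Ps. if k = j then of_real t * of_real t else 0)"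
    by (rule sum.cong) (use jn disj zP in \<open>auto simp: comp\<close>)
  moreover have "(\<Sum>k\<in>Ns. z0 $ k * cnj (z0 $ k)) = (\<Sum>k\<in>Ns. if k = n then of_real t * of_real t else 0)"
    by (rule sum.cong) (use jn disj zN in \<open>auto simp: comp\<close>)
  moreover have "z0 $ j = of_real t" using comp[of j] zP[OF jn(1)] by simp
  ultimately show ?thesis
    using that[of z0 j] t jn unfolding hform_def by simp
qed

section \<open>A holomorphic chart for orthogonal pairs near a null vector\<close>

text \<open>Chart coordinates: X $ Some (k, True) and X $ Some (k, False) are the complexified real
  and imaginary parts a_k, b_k of z_k, and X $ None is the complexified angle \<theta> at the
  pivot. The coordinates Some (j, _) at the pivot itself are dummies; chart_inv copies them
  from the centre X0, so that it maps (z0, z0) back to X0.\<close>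

definition chart_re :: "complex ^ (('n::finite \<times> bool) option) \<Rightarrow> 'n \<Rightarrow> complex" where
  "chart_re X k = X $ Some (k, True)"

definition chart_im :: "complex ^ (('n::finite \<times> bool) option) \<Rightarrow> 'n \<Rightarrow> complex" where
  "chart_im X k = X $ Some (k, False)"

definition chart_angle :: "complex ^ (('n::finite \<times> bool) option) \<Rightarrow> complex" where
  "chart_angle X = X $ None"

definition chart_residual ::
  "'n::finite set \<Rightarrow> 'n set \<Rightarrow> 'n \<Rightarrow> complex ^ (('n \<times> bool) option) \<Rightarrow> complex" where
  "chart_residual Ps Ns j X =
     (\<Sum>k\<in>Ps - {j}. (chart_re X k + \<i> * chart_im X k) * (chart_re X k - \<i> * chart_im X k))
   - (\<Sum>k\<in>Ns. (chart_re X k + \<i> * chart_im X k) * (chart_re X k - \<i> * chart_im X k))"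

definition chart_pivot ::
  "'n::finite set \<Rightarrow> 'n set \<Rightarrow> 'n \<Rightarrow> complex ^ (('n \<times> bool) option) \<Rightarrow> complex" where
  "chart_pivot Ps Ns j X = csqrt (- chart_residual Ps Ns j X)"

definition chart_z ::
  "'n::finite set \<Rightarrow> 'n set \<Rightarrow> 'n \<Rightarrow> complex ^ (('n \<times> bool) option) \<Rightarrow> complex ^ 'n" where
  "chart_z Ps Ns j X = (\<chi> k. if k = j then chart_pivot Ps Ns j X * exp (\<i> * chart_angle X)
     else chart_re X k + \<i> * chart_im X k)"

definition chart_w_conj ::
  "'n::finite set \<Rightarrow> 'n set \<Rightarrow> 'n \<Rightarrow> complex ^ (('n \<times> bool) option) \<Rightarrow> complex ^ 'n" where
  "chart_w_conj Ps Ns j X = (\<chi> k. if k = j then chart_pivot Ps Ns j X * exp (- (\<i> * chart_angle X))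
     else chart_re X k - \<i> * chart_im X k)"

definition chart_inv :: "complex ^ (('n::finite \<times> bool) option) \<Rightarrow> 'n \<Rightarrow> complex ^ 'n \<Rightarrow> complex ^ 'n
    \<Rightarrow> complex ^ (('n \<times> bool) option)" where
  "chart_inv X0 j z w = (\<chi> c. case c of None \<Rightarrow> - \<i> * Ln (z $ j / csqrt (z $ j * cnj (w $ j)))
     | Some (k, b) \<Rightarrow> if k = j then X0 $ c else if b then (z $ k + cnj (w $ k)) / 2
        else (z $ k - cnj (w $ k)) / (2 * \<i>))"

definition real_chart_point :: "complex ^ 'n::finite \<Rightarrow> complex ^ (('n \<times> bool) option)" where
  "real_chart_point z0 = (\<chi> c. case c of None \<Rightarrow> 0
     | Some (k, b) \<Rightarrow> if b then of_real (Re (z0 $ k)) else of_real (Im (z0 $ k)))"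

lemma chart_z_nth: "chart_z Ps Ns j X $ k = (if k = j then chart_pivot Ps Ns j X * exp (\<i> * chart_angle X)
     else chart_re X k + \<i> * chart_im X k)"
  by (simp add: chart_z_def)

lemma chart_w_conj_nth: "chart_w_conj Ps Ns j X $ k = (if k = j then chart_pivot Ps Ns j X * exp (- (\<i> * chart_angle X))
     else chart_re X k - \<i> * chart_im X k)"
  by (simp add: chart_w_conj_def)

lemma real_chart_point_real: "real_chart_point z0 $ c \<in> \<real>"
  by (cases c) (auto simp: real_chart_point_def split: prod.splits)

lemma chart_Reals_null_diagonal:
  fixes X :: "complex ^ (('n::finite \<times> bool) option)"
  assumes j: "j \<in> Ps" "j \<notin> Ns" and real: "\<forall>c. X $ c \<in> \<real>"
    and pos: "Re (- chart_residual Ps Ns j X) > 0"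
  shows "vconj (chart_w_conj Ps Ns j X) = chart_z Ps Ns j X"
    and "hform Ps Ns (chart_z Ps Ns j X) (chart_z Ps Ns j X) = 0"
proof -
  let ?z = "chart_z Ps Ns j X"
  have cre: "cnj (chart_re X k) = chart_re X k" "cnj (chart_im X k) = chart_im X k" for k
    using real unfolding chart_re_def chart_im_def by (simp_all add: Reals_cnj_iff)
  have cangle: "cnj (chart_angle X) = chart_angle X"
    using real unfolding chart_angle_def by (simp add: Reals_cnj_iff)
  have "cnj (chart_residual Ps Ns j X) = chart_residual Ps Ns j X"
    unfolding chart_residual_def by (simp add: cre mult.commute)
  then have "Im (- chart_residual Ps Ns j X) = 0"
    by (metis Reals_cnj_iff complex_is_Real_iff uminus_complex.sel(2) neg_equal_0_iff_equal)
  then have "chart_pivot Ps Ns j X = of_real (sqrt (Re (- chart_residual Ps Ns j X)))"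
    unfolding chart_pivot_def using pos by (subst csqrt_of_real_nonneg) auto
  then have cpivot: "cnj (chart_pivot Ps Ns j X) = chart_pivot Ps Ns j X" by simp
  show "vconj (chart_w_conj Ps Ns j X) = ?z"
    by (simp add: vec_eq_iff chart_w_conj_nth chart_z_nth cpivot cre cangle exp_cnj)
  have "?z $ j * cnj (?z $ j)
      = (chart_pivot Ps Ns j X)\<^sup>2 * (exp (\<i> * chart_angle X) * exp (- (\<i> * chart_angle X)))"
    by (simp add: chart_z_nth cpivot cangle exp_cnj power2_eq_square)
  also have "\<dots> = - chart_residual Ps Ns j X"
    by (simp add: chart_pivot_def flip: exp_add)
  finally have "?z $ j * cnj (?z $ j) = - chart_residual Ps Ns j X" .
  moreover have "chart_residual Ps Ns j X
      = (\<Sum>k\<in>Ps - {j}. ?z $ k * cnj (?z $ k)) - (\<Sum>k\<in>Ns. ?z $ k * cnj (?z $ k))"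
    unfolding chart_residual_def using j(2)
    by (intro arg_cong2[where f = minus] sum.cong) (auto simp: chart_z_nth cre)
  ultimately show "hform Ps Ns ?z ?z = 0"
    using hform_remove_pivot[OF j] by simp
qed

lemma chart_inv_inverse:
  fixes z w :: "complex ^ 'n::finite"
  assumes j: "j \<in> Ps" "j \<notin> Ns" and orth: "hform Ps Ns z w = 0" and nz: "z $ j \<noteq> 0" "w $ j \<noteq> 0"
  shows "chart_z Ps Ns j (chart_inv X0 j z w) = z" and "vconj (chart_w_conj Ps Ns j (chart_inv X0 j z w)) = w"
proof -
  define Y where "Y = chart_inv X0 j z w"
  have z_off: "chart_re Y k + \<i> * chart_im Y k = z $ k" if "k \<noteq> j" for k
    using that unfolding Y_def chart_inv_def chart_re_def chart_im_def by (simp add: field_simps)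
  have w_off: "chart_re Y k - \<i> * chart_im Y k = cnj (w $ k)" if "k \<noteq> j" for k
    using that unfolding Y_def chart_inv_def chart_re_def chart_im_def by (simp add: field_simps)
  have "chart_residual Ps Ns j Y = (\<Sum>k\<in>Ps - {j}. z $ k * cnj (w $ k)) - (\<Sum>k\<in>Ns. z $ k * cnj (w $ k))"
    unfolding chart_residual_def using j(2)
    by (intro arg_cong2[where f = minus] sum.cong) (auto intro!: arg_cong2[where f = times] z_off w_off)
  then have residual: "- chart_residual Ps Ns j Y = z $ j * cnj (w $ j)"
    using orth hform_remove_pivot[OF j, of z w] by algebra
  define s where "s = csqrt (z $ j * cnj (w $ j))"
  have pivot: "chart_pivot Ps Ns j Y = s" unfolding chart_pivot_def s_def residual ..
  have s0: "s \<noteq> 0" unfolding s_def using nz by simp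
  have ss: "s * s = z $ j * cnj (w $ j)" unfolding s_def by (metis power2_csqrt power2_eq_square)
  have angle: "chart_angle Y = - \<i> * Ln (z $ j / s)"
    unfolding Y_def chart_inv_def chart_angle_def s_def by simp
  have "z $ j / s \<noteq> 0" using nz s0 by simp
  then have e1: "exp (\<i> * chart_angle Y) = z $ j / s" and e2: "exp (- (\<i> * chart_angle Y)) = s / z $ j"
    unfolding angle by (simp_all add: exp_minus)
  show "chart_z Ps Ns j Y = z"
    by (simp add: vec_eq_iff chart_z_nth z_off pivot e1 s0)
  have "chart_w_conj Ps Ns j Y $ j = cnj (w $ j)"
    using nz s0 by (simp add: chart_w_conj_nth pivot e2 ss[symmetric] field_simps)
  then show "vconj (chart_w_conj Ps Ns j Y) = w"
    by (auto simp: vec_eq_iff chart_w_conj_nth w_off)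
qed

lemma chart_inv_real_chart_point:
  fixes z0 :: "complex ^ 'n::finite"
  assumes "z0 $ j \<in> \<real>" "Re (z0 $ j) > 0"
  shows "chart_inv (real_chart_point z0) j z0 z0 = real_chart_point z0"
proof -
  obtain a where a: "z0 $ j = of_real a" "a > 0" using assms by (metis Reals_cases Re_complex_of_real)
  then have "csqrt (z0 $ j * cnj (z0 $ j)) = z0 $ j"
    by (simp flip: of_real_mult)
  then have angle: "Ln (z0 $ j / csqrt (z0 $ j * cnj (z0 $ j))) = 0" using a by simp
  show ?thesis
    unfolding vec_eq_iff
  proof
    fix c :: "('n \<times> bool) option"
    show "chart_inv (real_chart_point z0) j z0 z0 $ c = real_chart_point z0 $ c"
      using angle
      by (cases c) (auto simp: chart_inv_def real_chart_point_def complex_add_cnj complex_diff_cnj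
          field_simps split: prod.splits)
  qed
qed

lemma chart_residual_slice_holomorphic:
  "(\<lambda>l. chart_residual Ps Ns j (vec_upd X i l)) holomorphic_on T"
  unfolding chart_residual_def chart_re_def chart_im_def
  by (intro holomorphic_intros vec_upd_nth_holomorphic_on)

lemma chart_z_slice_holomorphic:
  assumes "\<And>l. l \<in> T \<Longrightarrow> - chart_residual Ps Ns j (vec_upd X i l) \<notin> \<real>\<^sub>\<le>\<^sub>0"
  shows "(\<lambda>l. chart_z Ps Ns j (vec_upd X i l) $ k) holomorphic_on T"
  unfolding chart_z_nth chart_pivot_def chart_angle_def chart_re_def chart_im_def
  using assms
  by (cases "k = j") (auto intro!: holomorphic_intros chart_residual_slice_holomorphic vec_upd_nth_holomorphic_on)

lemma chart_w_conj_slice_holomorphic: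
  assumes "\<And>l. l \<in> T \<Longrightarrow> - chart_residual Ps Ns j (vec_upd X i l) \<notin> \<real>\<^sub>\<le>\<^sub>0"
  shows "(\<lambda>l. chart_w_conj Ps Ns j (vec_upd X i l) $ k) holomorphic_on T"
  unfolding chart_w_conj_nth chart_pivot_def chart_angle_def chart_re_def chart_im_def
  using assms
  by (cases "k = j") (auto intro!: holomorphic_intros chart_residual_slice_holomorphic vec_upd_nth_holomorphic_on)

lemma chart_form_slice_holomorphic:
  fixes G :: "complex ^ 'n \<Rightarrow> complex ^ 'm"
  assumes G: "cholomorphic_on G W"
    and dom: "\<And>Y. Y \<in> S \<Longrightarrow> chart_z Ps Ns j Y \<in> W \<and> vconj (chart_w_conj Ps Ns j Y) \<in> W
                \<and> Re (- chart_residual Ps Ns j Y) > 0"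
    and "open S"
  shows "(\<lambda>l. hform Ps' Ns' (G (chart_z Ps Ns j (vec_upd X i l))) (G (vconj (chart_w_conj Ps Ns j (vec_upd X i l)))))
           holomorphic_on {l. vec_upd X i l \<in> S}"
proof -
  let ?T = "{l. vec_upd X i l \<in> S}"
  have T: "open ?T" using open_vec_upd_slice[OF \<open>open S\<close>] .
  have not_nonpos: "- chart_residual Ps Ns j (vec_upd X i l) \<notin> \<real>\<^sub>\<le>\<^sub>0" if "l \<in> ?T" for l
    using dom[of "vec_upd X i l"] that by (simp add: complex_nonpos_Reals_iff)
  have "(\<lambda>l. G (chart_z Ps Ns j (vec_upd X i l)) $ m) holomorphic_on ?T" for m
    by (rule holomorphic_on_cholomorphic_comp[OF T G]) (use dom in \<open>auto intro!: chart_z_slice_holomorphic not_nonpos\<close>)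
  moreover have "(\<lambda>l. cnj (G (vconj (chart_w_conj Ps Ns j (vec_upd X i l))) $ m)) holomorphic_on ?T" for m
    by (rule holomorphic_on_conj_cholomorphic_comp[OF T G]) (use dom in \<open>auto intro!: chart_w_conj_slice_holomorphic not_nonpos\<close>)
  ultimately show ?thesis unfolding hform_def by (intro holomorphic_intros)
qed

lemma isCont_chart_residual: "isCont (chart_residual Ps Ns j) X"
  unfolding chart_residual_def chart_re_def chart_im_def by (intro continuous_intros)

lemma isCont_chart_pivot:
  assumes "- chart_residual Ps Ns j X \<notin> \<real>\<^sub>\<le>\<^sub>0"
  shows "isCont (chart_pivot Ps Ns j) X"
  unfolding chart_pivot_def using assms
  by (intro isCont_csqrt' isCont_minus isCont_chart_residual)

lemma isCont_chart_z:
  assumes "- chart_residual Ps Ns j X \<notin> \<real>\<^sub>\<le>\<^sub>0"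
  shows "isCont (chart_z Ps Ns j) X"
  unfolding chart_z_def chart_angle_def chart_re_def chart_im_def
proof (intro isCont_vec_lambda)
  fix k show "isCont (\<lambda>X. if k = j then chart_pivot Ps Ns j X * exp (\<i> * X $ None)
      else X $ Some (k, True) + \<i> * X $ Some (k, False)) X"
    by (cases "k = j") (auto intro!: continuous_intros isCont_chart_pivot[OF assms])
qed

lemma isCont_vconj_chart_w_conj:
  assumes "- chart_residual Ps Ns j X \<notin> \<real>\<^sub>\<le>\<^sub>0"
  shows "isCont (\<lambda>X. vconj (chart_w_conj Ps Ns j X)) X"
  unfolding vconj_def chart_w_conj_nth chart_angle_def chart_re_def chart_im_def
proof (intro isCont_vec_lambda)
  fix k show "isCont (\<lambda>X. cnj (if k = j then chart_pivot Ps Ns j X * exp (- (\<i> * X $ None))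
      else X $ Some (k, True) - \<i> * X $ Some (k, False))) X"
    by (cases "k = j") (auto intro!: continuous_intros isCont_chart_pivot[OF assms])
qed

lemma isCont_chart_inv:
  fixes z0 :: "complex ^ 'n::finite"
  assumes "z0 $ j \<in> \<real>" "Re (z0 $ j) > 0"
  shows "isCont (\<lambda>p. chart_inv X0 j (fst p) (snd p)) (z0, z0)"
  unfolding chart_inv_def
proof (rule isCont_vec_lambda)
  fix c :: "('n \<times> bool) option"
  obtain a where a: "z0 $ j = of_real a" "a > 0"
    using assms by (metis Reals_cases Re_complex_of_real)
  have "z0 $ j * cnj (z0 $ j) \<notin> \<real>\<^sub>\<le>\<^sub>0"
    using a by (simp add: complex_nonpos_Reals_iff not_le flip: of_real_mult)
  then have "isCont (\<lambda>p. csqrt (fst p $ j * cnj (snd p $ j))) (z0, z0)"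
    by (intro isCont_csqrt') (auto intro!: continuous_intros)
  moreover have "csqrt (z0 $ j * cnj (z0 $ j)) = z0 $ j"
    using a by (simp flip: of_real_mult)
  ultimately have "isCont (\<lambda>p. Ln (fst p $ j / csqrt (fst p $ j * cnj (snd p $ j)))) (z0, z0)"
    using a by (intro isCont_Ln' continuous_intros) auto
  then show "isCont (\<lambda>p. case c of None \<Rightarrow> - \<i> * Ln (fst p $ j / csqrt (fst p $ j * cnj (snd p $ j)))
         | Some (k, b) \<Rightarrow> if k = j then X0 $ c else if b then (fst p $ k + cnj (snd p $ k)) / 2
              else (fst p $ k - cnj (snd p $ k)) / (2 * \<i>)) (z0, z0)"
  proof (cases c)
    case (Some q)
    then obtain k b where "c = Some (k, b)" by (cases q) auto
    then show ?thesis by (cases "k = j"; cases b) (auto intro!: continuous_intros)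
  qed (auto intro!: continuous_intros)
qed

lemma chart_at_real_chart_point:
  assumes j: "j \<in> Ps" "j \<notin> Ns" and z0: "z0 $ j \<in> \<real>" "Re (z0 $ j) > 0" "hform Ps Ns z0 z0 = 0"
  defines "X0 \<equiv> real_chart_point z0"
  shows "chart_z Ps Ns j X0 = z0" "vconj (chart_w_conj Ps Ns j X0) = z0"
    and "Re (- chart_residual Ps Ns j X0) > 0"
proof -
  have "z0 $ j \<noteq> 0" using z0(2) by auto
  then show z: "chart_z Ps Ns j X0 = z0" and "vconj (chart_w_conj Ps Ns j X0) = z0"
    using chart_inv_inverse[OF j z0(3), of X0] chart_inv_real_chart_point[OF z0(1,2)]
    unfolding X0_def by auto
  have "chart_angle X0 = 0" unfolding X0_def real_chart_point_def chart_angle_def by simp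
  then have "chart_pivot Ps Ns j X0 = z0 $ j"
    using arg_cong[OF z, of "\<lambda>v. v $ j"] by (simp add: chart_z_nth)
  then have "- chart_residual Ps Ns j X0 = z0 $ j * z0 $ j"
    unfolding chart_pivot_def by (metis power2_csqrt power2_eq_square)
  moreover obtain a where "z0 $ j = of_real a" "a > 0"
    using z0(1,2) by (metis Reals_cases Re_complex_of_real)
  ultimately show "Re (- chart_residual Ps Ns j X0) > 0" by simp
qed

lemma eventually_chart_in_domain:
  assumes j: "j \<in> Ps" "j \<notin> Ns" and z0: "z0 $ j \<in> \<real>" "Re (z0 $ j) > 0" "hform Ps Ns z0 z0 = 0"
    and W: "open W" "z0 \<in> W"
  shows "\<forall>\<^sub>F X in nhds (real_chart_point z0). chart_z Ps Ns j X \<in> W \<and>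
           vconj (chart_w_conj Ps Ns j X) \<in> W \<and> Re (- chart_residual Ps Ns j X) > 0"
proof -
  note centre = chart_at_real_chart_point[OF j z0]
  then have "- chart_residual Ps Ns j (real_chart_point z0) \<notin> \<real>\<^sub>\<le>\<^sub>0"
    by (simp add: complex_nonpos_Reals_iff)
  then have "isCont (chart_z Ps Ns j) (real_chart_point z0)"
    "isCont (\<lambda>X. vconj (chart_w_conj Ps Ns j X)) (real_chart_point z0)"
    "isCont (\<lambda>X. - chart_residual Ps Ns j X) (real_chart_point z0)"
    by (simp_all add: isCont_chart_z isCont_vconj_chart_w_conj isCont_minus isCont_chart_residual)
  from isCont_eventually_in_open[OF this(1) W(1)] isCont_eventually_in_open[OF this(2) W(1)]
    isCont_eventually_in_open[OF this(3) open_halfspace_Re_gt[of 0]]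
  show ?thesis
    using W(2) centre by (simp add: eventually_conj)
qed

lemma chart_form_eq_0_near_real_chart_point:
  fixes G :: "complex ^ 'n::finite \<Rightarrow> complex ^ 'm::finite"
  assumes j: "j \<in> Ps" "j \<notin> Ns" and z0: "z0 $ j \<in> \<real>" "Re (z0 $ j) > 0" "hform Ps Ns z0 z0 = 0"
    and W: "open W" "z0 \<in> W" and G: "cholomorphic_on G W"
    and G_null: "\<And>z. z \<in> W \<Longrightarrow> hform Ps Ns z z = 0 \<Longrightarrow> hform Ps' Ns' (G z) (G z) = 0"
  obtains \<delta> where "\<delta> > 0"
    "\<And>X. X \<in> ball (real_chart_point z0) \<delta> \<Longrightarrow>
       hform Ps' Ns' (G (chart_z Ps Ns j X)) (G (vconj (chart_w_conj Ps Ns j X))) = 0"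
proof -
  define X0 where "X0 = real_chart_point z0"
  obtain \<delta> where "\<delta> > 0" and dom: "\<And>X. X \<in> ball X0 \<delta> \<Longrightarrow> chart_z Ps Ns j X \<in> W \<and>
      vconj (chart_w_conj Ps Ns j X) \<in> W \<and> Re (- chart_residual Ps Ns j X) > 0"
    using eventually_chart_in_domain[OF j z0 W] unfolding X0_def eventually_nhds_metric
    by (auto simp: dist_commute)
  have "hform Ps' Ns' (G (chart_z Ps Ns j X)) (G (vconj (chart_w_conj Ps Ns j X))) = 0"
    if "X \<in> ball X0 \<delta>" for X
  proof (rule separately_holomorphic_eq_0_from_Reals[OF _ _ _ that])
    show "X0 $ i \<in> \<real>" for i unfolding X0_def by (rule real_chart_point_real)
    show "(\<lambda>l. hform Ps' Ns' (G (chart_z Ps Ns j (vec_upd Y i l))) (G (vconj (chart_w_conj Ps Ns j (vec_upd Y i l)))))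
        holomorphic_on {l. vec_upd Y i l \<in> ball X0 \<delta>}" for Y i
      using dom by (intro chart_form_slice_holomorphic[OF G]) auto
    fix Y assume Y: "Y \<in> ball X0 \<delta>" "\<forall>i. Y $ i \<in> \<real>"
    from chart_Reals_null_diagonal[OF j Y(2)] dom[OF Y(1)]
    show "hform Ps' Ns' (G (chart_z Ps Ns j Y)) (G (vconj (chart_w_conj Ps Ns j Y))) = 0"
      using G_null by simp
  qed
  with \<open>\<delta> > 0\<close> show ?thesis using that unfolding X0_def by blast
qed

lemma cholomorphic_orthogonal_near_null:
  fixes G :: "complex ^ 'n::finite \<Rightarrow> complex ^ 'm::finite"
  assumes j: "j \<in> Ps" "j \<notin> Ns" and z0: "z0 $ j \<in> \<real>" "Re (z0 $ j) > 0" "hform Ps Ns z0 z0 = 0"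
    and W: "open W" "z0 \<in> W" and G: "cholomorphic_on G W"
    and G_null: "\<And>z. z \<in> W \<Longrightarrow> hform Ps Ns z z = 0 \<Longrightarrow> hform Ps' Ns' (G z) (G z) = 0"
  obtains \<delta> where "\<delta> > 0"
    "\<And>z w. z \<in> ball z0 \<delta> \<Longrightarrow> w \<in> ball z0 \<delta> \<Longrightarrow> hform Ps Ns z w = 0 \<Longrightarrow>
       hform Ps' Ns' (G z) (G w) = 0"
proof -
  define X0 where "X0 = real_chart_point z0"
  obtain \<delta>1 where "\<delta>1 > 0" and chart_form: "\<And>X. X \<in> ball X0 \<delta>1 \<Longrightarrow>
      hform Ps' Ns' (G (chart_z Ps Ns j X)) (G (vconj (chart_w_conj Ps Ns j X))) = 0"
    using chart_form_eq_0_near_real_chart_point[OF j z0 W G G_null] unfolding X0_def by blast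
  have "z0 $ j \<noteq> 0" using z0(2) by auto
  have "chart_inv X0 j z0 z0 = X0"
    unfolding X0_def by (rule chart_inv_real_chart_point[OF z0(1,2)])
  then have "\<forall>\<^sub>F p in nhds (z0, z0). chart_inv X0 j (fst p) (snd p) \<in> ball X0 \<delta>1 \<and>
      fst p $ j \<in> - {0} \<and> snd p $ j \<in> - {0}"
    using isCont_eventually_in_open[OF isCont_chart_inv[OF z0(1,2)] open_ball]
      isCont_eventually_in_open[where f = "\<lambda>p. fst p $ j" and a = "(z0, z0)" and S = "- {0}"]
      isCont_eventually_in_open[where f = "\<lambda>p. snd p $ j" and a = "(z0, z0)" and S = "- {0}"]
      \<open>\<delta>1 > 0\<close> \<open>z0 $ j \<noteq> 0\<close>
    by (auto intro!: eventually_conj continuous_intros)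
  then obtain \<delta>2 where "\<delta>2 > 0" and near: "\<And>p. dist p (z0, z0) < \<delta>2 \<Longrightarrow>
      chart_inv X0 j (fst p) (snd p) \<in> ball X0 \<delta>1 \<and> fst p $ j \<noteq> 0 \<and> snd p $ j \<noteq> 0"
    unfolding eventually_nhds_metric by auto
  have "hform Ps' Ns' (G z) (G w) = 0"
    if "z \<in> ball z0 (\<delta>2 / 2)" "w \<in> ball z0 (\<delta>2 / 2)" "hform Ps Ns z w = 0" for z w
  proof -
    have "dist (z, w) (z0, z0) < \<delta>2"
      unfolding dist_Pair_Pair using that(1,2)
      by (intro sqrt_sum_squares_half_less) (auto simp: dist_commute)
    from near[OF this] show ?thesis
      using chart_form[of "chart_inv X0 j z w"] chart_inv_inverse[OF j that(3), of X0] by simp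
  qed
  moreover have "\<delta>2 / 2 > 0" using \<open>\<delta>2 > 0\<close> by simp
  ultimately show ?thesis using that by blast
qed

section \<open>Passing to projective space\<close>

lemma local_orthogonal_map_proj_pt_image:
  fixes B :: "(complex ^ 'n::finite) set" and G :: "complex ^ 'n \<Rightarrow> complex ^ 'm::finite"
  assumes F: "proj_holomorphic F U" and B: "open B" "connected B" "0 \<notin> B" "proj_pt ` B \<subseteq> U"
    and null: "z0 \<in> B" "hform Ps Ns z0 z0 = 0"
    and lift: "\<forall>w\<in>B. G w \<noteq> 0 \<and> proj_pt (G w) = F (proj_pt w)"
    and orth: "\<And>z w. z \<in> B \<Longrightarrow> w \<in> B \<Longrightarrow> hform Ps Ns z w = 0 \<Longrightarrow> hform Ps' Ns' (G z) (G w) = 0"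
  shows "local_orthogonal_map Ps Ns Ps' Ns' F (proj_pt ` B)"
  unfolding local_orthogonal_map_def
proof (intro conjI ballI impI)
  show V: "openin proj_topology (proj_pt ` B)"
    using openin_proj_pt_image[OF B(1,3)] .
  show "connectedin proj_topology (proj_pt ` B)"
    using connectedin_proj_pt_image[OF B(2,3)] .
  have "z0 \<noteq> 0" using null(1) B(3) by auto
  then show "\<exists>p\<in>proj_pt ` B. null_pt Ps Ns p"
    using null unfolding null_pt_def by blast
  show "proj_holomorphic F (proj_pt ` B)"
    using proj_holomorphic_subset[OF F V B(4)] .
  fix p q assume "p \<in> proj_pt ` B" "q \<in> proj_pt ` B" "orth_pt Ps Ns p q"
  then obtain b1 b2 x y where b: "b1 \<in> B" "b2 \<in> B" "p = proj_pt b1" "q = proj_pt b2"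
    and xy: "p = proj_pt x" "q = proj_pt y" "hform Ps Ns x y = 0"
    unfolding orth_pt_def by blast
  obtain c d where "b1 = c *s x" "b2 = d *s y"
    using proj_pt_eqD[of b1 x] proj_pt_eqD[of b2 y] b xy by metis
  then have "hform Ps' Ns' (G b1) (G b2) = 0"
    using orth[OF b(1,2)] xy(3) by (simp add: hform_smult_left hform_smult_right)
  then show "orth_pt Ps' Ns' (F p) (F q)"
    using lift b unfolding orth_pt_def by metis
qed

theorem mainTheorem2:
  fixes Ps Ns :: "'n::finite set" and Ps' Ns' :: "'m::finite set"
    and F :: "(complex ^ 'n) set \<Rightarrow> (complex ^ 'm) set"
    and U :: "(complex ^ 'n) set set"
  assumes "signature_ok Ps Ns" and "signature_ok Ps' Ns'"
    and "card Ps \<ge> 1" and "card Ns \<ge> 1"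
    and "openin proj_topology U"
    and "\<exists>p\<in>U. null_pt Ps Ns p"
    and "proj_holomorphic F U"
    and "\<forall>p\<in>U. null_pt Ps Ns p \<longrightarrow> null_pt Ps' Ns' (F p)"
  shows "\<exists>V. V \<subseteq> U \<and> local_orthogonal_map Ps Ns Ps' Ns' F V"
proof -
  define Om where "Om = {z. z \<noteq> 0 \<and> proj_pt z \<in> U}"
  have "open Om" using assms(5) unfolding openin_proj_topology Om_def by simp
  moreover have "c *s x \<in> Om" if "x \<in> Om" "c \<noteq> 0" for x c
    using that proj_pt_smult[of c x] unfolding Om_def by simp
  moreover obtain z where "z \<in> Om" "hform Ps Ns z z = 0"
    using assms(6) unfolding null_pt_def Om_def by blast
  ultimately obtain z0 j where z0: "z0 \<in> Om" "j \<in> Ps" "z0 $ j \<in> \<real>" "Re (z0 $ j) > 0" "hform Ps Ns z0 z0 = 0"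
    using exists_null_positive_pivot assms(1,3,4) unfolding signature_ok_def
    by (metis card.empty not_one_le_zero)
  have j: "j \<in> Ps" "j \<notin> Ns" using z0(2) assms(1) unfolding signature_ok_def by auto
  obtain W G where W: "open W" "z0 \<in> W" "\<forall>w\<in>W. w \<noteq> 0 \<and> proj_pt w \<in> U" "cholomorphic_on G W"
    and lift: "\<forall>w\<in>W. G w \<noteq> 0 \<and> proj_pt (G w) = F (proj_pt w)"
    using proj_holomorphic_liftE[OF assms(7)] z0(1) unfolding Om_def by blast
  have "hform Ps' Ns' (G z) (G z) = 0" if "z \<in> W" "hform Ps Ns z z = 0" for z
    using assms(8) W(3) lift that null_pt_hform_eq_0 unfolding null_pt_def by metis
  then obtain \<delta> where "\<delta> > 0" and orth: "\<And>z w. z \<in> ball z0 \<delta> \<Longrightarrow> w \<in> ball z0 \<delta> \<Longrightarrow>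
      hform Ps Ns z w = 0 \<Longrightarrow> hform Ps' Ns' (G z) (G w) = 0"
    using cholomorphic_orthogonal_near_null[OF j z0(3,4,5) W(1,2,4)] by blast
  obtain e where "e > 0" "ball z0 e \<subseteq> W" using W(1,2) open_contains_ball by blast
  define B where "B = ball z0 (min \<delta> e)"
  have "B \<subseteq> W" "z0 \<in> B" using \<open>e > 0\<close> \<open>\<delta> > 0\<close> \<open>ball z0 e \<subseteq> W\<close> unfolding B_def by auto
  then have "0 \<notin> B" "proj_pt ` B \<subseteq> U" using W(3) by auto
  moreover have "open B" "connected B" unfolding B_def by simp_all
  ultimately have "local_orthogonal_map Ps Ns Ps' Ns' F (proj_pt ` B)"
    using local_orthogonal_map_proj_pt_image[OF assms(7), of B z0 Ps Ns G Ps' Ns']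
      \<open>B \<subseteq> W\<close> \<open>z0 \<in> B\<close> z0(5) lift orth unfolding B_def by auto
  with \<open>proj_pt ` B \<subseteq> U\<close> show ?thesis by blast
qed

end
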